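(* Let $\{z_n\}$ be generated by the process $\mathcal{S}(\kappa,\Phi)$ of Theorem 6 ($\kappa$ with $\sum_n\rho^{\kappa(n)}=\infty$ for all $0<\rho\le1$; $\Phi$ the non-modal count with respect to $K$-nearest neighbors, $K\ge2$). Let $Q_n=\{x\in X:\Phi(x,Z_n)>0\}$ and $Q=\limsup_n Q_n$ (points lying in infinitely many $Q_n$). If $X$ is separable and the set of $f$-boundary points has $\mu$-measure zero, then with probability one $\mu(Q)=0$.
   Context: $(X,d)$ metric space with probability measure $\mu$; $Y$ countable; $f:X\to Y$; $X_y=f^{-1}(y)$; $B_\epsilon(x)$ open ball; $\operatorname{supp}(\mu)=\{x:\mu(B_\epsilon(x))>0\ \forall\epsilon>0\}$. $b$ is an $f$-boundary point iff $\mu(B_\epsilon(b)\setminus X_{f(b)})>0$ for all $\epsilon>0$. $\operatorname{modefreq}_f(A)=\max_y|A\cap X_y|$. $V_S(x)=\emptyset$ if $x\in S$; otherwise $V_S(x)$ is a $K$-element subset of $S$ minimizing distance to $x$, chosen among such subsets to minimize $\operatorname{modefreq}_f$. $\Phi(x,S)=|V_S(x)|-\operatorname{modefreq}_f(V_S(x))$. Process $\mathcal{S}(\kappa,\Phi)$: $Z_0=\emptyset$; at step $n$ draw $\kappa(n)$ candidates i.i.d. from $\mu$, independent of the past; $z_n$ maximizes $\Phi(\cdot,Z_{n-1})$ over candidates (ties uniformly at random); $Z_n=\{z_1,\dots,z_n\}$. *)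

theory Defs
  imports "HOL-Probability.Probability"
begin

definition modefreq :: "('a \<Rightarrow> 'b) \<Rightarrow> 'a set \<Rightarrow> nat" where
  "modefreq f A = (if A = {} then 0 else Max ((\<lambda>y. card {a\<in>A. f a = y}) ` (f ` A)))"

definition knn_sets :: "nat \<Rightarrow> 'a::metric_space set \<Rightarrow> 'a \<Rightarrow> 'a set set" where
  "knn_sets K S x = {V. V \<subseteq> S \<and> card V = min K (card S) \<and>
       (\<forall>v\<in>V. \<forall>w\<in>S - V. dist x v \<le> dist x w)}"

definition Vset :: "nat \<Rightarrow> ('a::metric_space \<Rightarrow> 'b) \<Rightarrow> 'a set \<Rightarrow> 'a \<Rightarrow> 'a set" where
  "Vset K f S x = (if x \<in> S then {} else
     (SOME V. V \<in> knn_sets K S x \<and> (\<forall>W\<in>knn_sets K S x. modefreq f V \<le> modefreq f W)))"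

definition Phi :: "nat \<Rightarrow> ('a::metric_space \<Rightarrow> 'b) \<Rightarrow> 'a \<Rightarrow> 'a set \<Rightarrow> nat" where
  "Phi K f x S = card (Vset K f S x) - modefreq f (Vset K f S x)"

definition boundary_pt :: "'a::metric_space measure \<Rightarrow> ('a \<Rightarrow> 'b) \<Rightarrow> 'a \<Rightarrow> bool" where
  "boundary_pt \<mu> f b \<longleftrightarrow> (\<forall>\<epsilon>>0. emeasure \<mu> (ball b \<epsilon> - f -` {f b}) > 0)"

text \<open>One step of the process: among the candidates c 0,...,c (k-1), choose one maximizing
  Phi(.,S); ties are broken by the tie-breaking value t in [0,1], which, when uniformly
  distributed, selects uniformly at random among the maximizing candidates.\<close>
definition pick :: "nat \<Rightarrow> ('a::metric_space \<Rightarrow> 'b) \<Rightarrow> 'a set \<Rightarrow> nat \<Rightarrow> (nat \<Rightarrow> 'a) \<Rightarrow> real \<Rightarrow> 'a" where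
  "pick K f S k c t =
    (let m = Max ((\<lambda>j. Phi K f (c j) S) ` {..<k});
         idx = filter (\<lambda>i. Phi K f (c i) S = m) [0..<k]
     in c (idx ! min (nat \<lfloor>t * real (length idx)\<rfloor>) (length idx - 1)))"

text \<open>The process S(kappa,Phi) driven by candidates C n i (i < kappa n, the candidates of
  step n) and tie-breaking values T n: Zproc .. n = Z_n, with Z_0 = {} and
  Z_n = insert z_n Z_(n-1), z_n = zproc .. n.\<close>
fun Zproc :: "nat \<Rightarrow> ('a::metric_space \<Rightarrow> 'b) \<Rightarrow> (nat \<Rightarrow> nat) \<Rightarrow> (nat \<Rightarrow> nat \<Rightarrow> 'a) \<Rightarrow> (nat \<Rightarrow> real) \<Rightarrow> nat \<Rightarrow> 'a set" where
  "Zproc K f \<kappa> C T 0 = {}"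
| "Zproc K f \<kappa> C T (Suc n) =
     insert (pick K f (Zproc K f \<kappa> C T n) (\<kappa> (Suc n)) (C (Suc n)) (T (Suc n))) (Zproc K f \<kappa> C T n)"

text \<open>Underlying probability space: all candidates i.i.d. mu, all tie-breakers i.i.d.
  uniform on [0,1], everything independent.\<close>
definition sample_space :: "'a measure \<Rightarrow> ((nat \<times> nat \<Rightarrow> 'a) \<times> (nat \<Rightarrow> real)) measure" where
  "sample_space \<mu> = (PiM UNIV (\<lambda>_. \<mu>)) \<Otimes>\<^sub>M (PiM UNIV (\<lambda>_. uniform_measure lborel {0..1::real}))"

end

theory Submission
  imports Defs
begin

text \<open>
  Fix a point x off the f-boundary, so that some ball around x carries (up to a null set) only
  the label f x, and assume every ball around x has positive measure. Since
  \<open>\<Sum>n \<mu>(B)^\<kappa>(n) = \<infinity>\<close>, the second Borel-Cantelli lemma makes all \<kappa>(n) candidates of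
  infinitely many steps fall into any given small ball around x; whichever candidate is chosen at
  such a step is then a new point close to x. Hence Z_n eventually contains x or K points of a ball
  around x on which all labels equal f x, and from then on the K nearest neighbours of x all carry
  the label f x, i.e. \<open>\<Phi>(x, Z_n) = 0\<close>. Separability reduces "every ball around x" to a countable
  family of balls, so almost surely this works simultaneously for all x outside the union of the
  boundary and the null balls of that family, which is a null set.
\<close>

lemma pick_in_candidates:
  assumes "k \<ge> 1"
  shows "\<exists>j<k. pick K f S k c t = c j"
proof -
  define m where "m = Max ((\<lambda>j. Phi K f (c j) S) ` {..<k})"
  define idx where "idx = filter (\<lambda>i. Phi K f (c i) S = m) [0..<k]"
  define p where "p = min (nat \<lfloor>t * real (length idx)\<rfloor>) (length idx - 1)"
  have "m \<in> (\<lambda>j. Phi K f (c j) S) ` {..<k}"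
    unfolding m_def using assms by (intro Max_in) (auto simp: lessThan_empty_iff)
  then have "idx \<noteq> []"
    unfolding idx_def by (auto simp: filter_empty_conv)
  then have "p < length idx"
    unfolding p_def by (cases idx) auto
  then have "idx ! p < k"
    using nth_mem unfolding idx_def by fastforce
  moreover have "pick K f S k c t = c (idx ! p)"
    unfolding pick_def m_def idx_def p_def Let_def by simp
  ultimately show ?thesis by blast
qed

lemma Zproc_Suc_insert_candidate:
  assumes "\<kappa> (Suc n) \<ge> 1"
  shows "\<exists>j<\<kappa> (Suc n). Zproc K f \<kappa> C T (Suc n) = insert (C (Suc n) j) (Zproc K f \<kappa> C T n)"
proof -
  obtain j where "j < \<kappa> (Suc n)"
    "pick K f (Zproc K f \<kappa> C T n) (\<kappa> (Suc n)) (C (Suc n)) (T (Suc n)) = C (Suc n) j"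
    using pick_in_candidates[OF assms] by blast
  then show ?thesis by auto
qed

lemma Zproc_mono: "n \<le> m \<Longrightarrow> Zproc K f \<kappa> C T n \<subseteq> Zproc K f \<kappa> C T m"
  by (induction m) (auto simp: le_Suc_eq)

lemma finite_Zproc: "finite (Zproc K f \<kappa> C T n)"
  by (induction n) auto

lemma Zproc_subset_candidates:
  assumes "\<And>n. n \<ge> 1 \<Longrightarrow> \<kappa> n \<ge> 1"
  shows "Zproc K f \<kappa> C T n \<subseteq> (\<Union>m. C m ` {..<\<kappa> m})"
proof (induction n)
  case (Suc n)
  obtain j where "j < \<kappa> (Suc n)"
    and "Zproc K f \<kappa> C T (Suc n) = insert (C (Suc n) j) (Zproc K f \<kappa> C T n)"
    using Zproc_Suc_insert_candidate[of \<kappa> n K f C T] assms[of "Suc n"] by auto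
  then show ?case
    using Suc.IH by auto
qed simp

section \<open>Nearest neighbours and the non-modal count\<close>

lemma exists_nearest_subset:
  assumes "finite S" "k \<le> card S"
  shows "\<exists>V\<subseteq>S. card V = k \<and> (\<forall>v\<in>V. \<forall>w\<in>S - V. dist x v \<le> dist x w)"
  using assms(2)
proof (induction k)
  case (Suc k)
  then obtain V where V: "V \<subseteq> S" "card V = k" "\<forall>v\<in>V. \<forall>w\<in>S - V. dist x v \<le> dist x w"
    by auto
  have "finite V"
    using V(1) assms(1) finite_subset by blast
  have "finite (S - V)" "S - V \<noteq> {}"
    using assms(1) Suc.prems V(1,2) by auto
  then obtain w where w: "w \<in> S - V" "\<And>u. u \<in> S - V \<Longrightarrow> dist x w \<le> dist x u"
    using arg_min_if_finite(1) arg_min_least by metis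
  show ?case
    using V w \<open>finite V\<close> by (intro exI[of _ "insert w V"]) auto
qed auto

lemma Vset_in_knn_sets:
  assumes "finite S" "x \<notin> S"
  shows "Vset K f S x \<in> knn_sets K S x"
proof -
  obtain V0 where "V0 \<in> knn_sets K S x"
    using exists_nearest_subset[OF assms(1), of "min K (card S)" x] by (auto simp: knn_sets_def)
  then have "\<exists>V. V \<in> knn_sets K S x \<and> (\<forall>W\<in>knn_sets K S x. modefreq f V \<le> modefreq f W)"
    using ex_has_least_nat[of "\<lambda>V. V \<in> knn_sets K S x" V0 "modefreq f"] by blast
  then have "(SOME V. V \<in> knn_sets K S x \<and> (\<forall>W\<in>knn_sets K S x. modefreq f V \<le> modefreq f W))
               \<in> knn_sets K S x"
    by (rule someI2_ex) blast
  then show ?thesis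
    unfolding Vset_def using assms(2) by simp
qed

lemma knn_set_subset_ball:
  assumes V: "V \<in> knn_sets K S x" and S: "finite S"
    and P: "P \<subseteq> S" "card P = K" "P \<subseteq> ball x r"
  shows "V \<subseteq> ball x r"
proof
  fix v assume v: "v \<in> V"
  have near: "\<forall>v\<in>V. \<forall>w\<in>S - V. dist x v \<le> dist x w" and "V \<subseteq> S"
    using V by (auto simp: knn_sets_def)
  then have "finite V" "card V = K"
    using V S finite_subset card_mono[OF S P(1)] P(2) by (auto simp: knn_sets_def)
  show "v \<in> ball x r"
  proof (rule ccontr)
    assume out: "v \<notin> ball x r"
    \<comment> \<open>a point of P outside V would be nearer to x than the neighbour v\<close>
    have "P \<subseteq> V"
    proof
      fix p assume "p \<in> P"
      then have "dist x p < r" "p \<in> S"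
        using P by auto
      then show "p \<in> V"
        using near v out by force
    qed
    then have "insert v P \<subseteq> V" "v \<notin> P"
      using v out P(3) by auto
    then have "card (insert v P) \<le> card V"
      using \<open>finite V\<close> card_mono by blast
    then show False
      using \<open>v \<notin> P\<close> \<open>card V = K\<close> P(2) finite_subset[OF P(1) S] by simp
  qed
qed

lemma modefreq_const:
  assumes "finite V" "V \<noteq> {}" "\<And>v. v \<in> V \<Longrightarrow> f v = y"
  shows "modefreq f V = card V"
proof -
  have "f ` V = {y}" "{a\<in>V. f a = y} = V"
    using assms by auto
  then show ?thesis
    unfolding modefreq_def using assms by simp
qed

lemma Phi_eq_0_if_member: "x \<in> S \<Longrightarrow> Phi K f x S = 0"
  by (simp add: Phi_def Vset_def)

lemma Phi_eq_0_if_near_labels_agree: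
  assumes S: "finite S" and P: "P \<subseteq> S" "card P = K" "P \<subseteq> ball x r" and "K \<ge> 1"
    and agree: "\<And>s. s \<in> S \<Longrightarrow> s \<in> ball x r \<Longrightarrow> f s = y"
  shows "Phi K f x S = 0"
proof (cases "x \<in> S")
  case True
  then show ?thesis by (rule Phi_eq_0_if_member)
next
  case False
  let ?V = "Vset K f S x"
  have V: "?V \<in> knn_sets K S x"
    using Vset_in_knn_sets[OF S False] .
  have "card ?V = K" "?V \<subseteq> S"
    using V card_mono[OF S P(1)] P(2) by (auto simp: knn_sets_def)
  moreover have "?V \<subseteq> ball x r"
    by (rule knn_set_subset_ball[OF V S P])
  ultimately have "modefreq f ?V = card ?V"
    using \<open>K \<ge> 1\<close> finite_subset[OF _ S] agree
    by (intro modefreq_const[where y = y]) (auto simp: subset_iff)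
  then show ?thesis by (simp add: Phi_def)
qed

lemma Zproc_eventually_near_points:
  assumes kpos: "\<And>n. n \<ge> 1 \<Longrightarrow> \<kappa> n \<ge> 1" and "r > 0"
    and hit: "\<And>\<delta>. \<delta> > 0 \<Longrightarrow> \<exists>\<^sub>F n in sequentially. \<forall>i<\<kappa> n. C n i \<in> ball x \<delta>"
  shows "\<exists>n0. x \<in> Zproc K f \<kappa> C T n0 \<or>
           (\<exists>P\<subseteq>Zproc K f \<kappa> C T n0. P \<subseteq> ball x r \<and> card P = k)"
proof (induction k)
  case 0
  show ?case by (intro exI[of _ 0] disjI2 exI[of _ "{}"]) auto
next
  case (Suc k)
  let ?Z = "Zproc K f \<kappa> C T"
  from Suc obtain n0 where n0: "x \<in> ?Z n0 \<or> (\<exists>P\<subseteq>?Z n0. P \<subseteq> ball x r \<and> card P = k)"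
    by blast
  show ?case
  proof (cases "x \<in> ?Z n0")
    case False
    with n0 obtain P where P: "P \<subseteq> ?Z n0" "P \<subseteq> ball x r" "card P = k"
      by blast
    have "finite P" "x \<notin> P"
      using P(1) False finite_subset[OF _ finite_Zproc] by auto
    define \<delta> where "\<delta> = Min (insert r (dist x ` P))"
    have "\<delta> > 0" "\<delta> \<le> r" "\<And>p. p \<in> P \<Longrightarrow> \<delta> \<le> dist x p"
      unfolding \<delta>_def using \<open>finite P\<close> \<open>x \<notin> P\<close> \<open>r > 0\<close> by (auto simp: Min_gr_iff)
    then obtain n where n: "n \<ge> Suc n0" "\<forall>i<\<kappa> n. C n i \<in> ball x \<delta>"
      using hit unfolding frequently_sequentially by blast
    then obtain n' where "n = Suc n'"
      by (cases n) auto
    then obtain j where j: "j < \<kappa> n" "?Z n = insert (C n j) (?Z n')"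
      using Zproc_Suc_insert_candidate[of \<kappa> n' K f C T] kpos[of n] by auto
    have z: "C n j \<in> ?Z n" "C n j \<in> ball x \<delta>"
      using j n(2) by auto
    then have "C n j \<notin> P"
      using \<open>\<And>p. p \<in> P \<Longrightarrow> \<delta> \<le> dist x p\<close> by fastforce
    show ?thesis
    proof (cases "C n j = x")
      case True
      then show ?thesis using z(1) by blast
    next
      case False
      have "?Z n0 \<subseteq> ?Z n"
        using n(1) by (intro Zproc_mono) simp
      then have "insert (C n j) P \<subseteq> ?Z n"
        using z(1) P(1) by auto
      moreover have "insert (C n j) P \<subseteq> ball x r"
        using z(2) P(2) \<open>\<delta> \<le> r\<close> by auto
      moreover have "card (insert (C n j) P) = Suc k"
        using \<open>C n j \<notin> P\<close> \<open>finite P\<close> P(3) by simp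
      ultimately show ?thesis by blast
    qed
  qed blast
qed

lemma Phi_Zproc_eventually_zero:
  assumes kpos: "\<And>n. n \<ge> 1 \<Longrightarrow> \<kappa> n \<ge> 1" and "K \<ge> 1" and "r > 0"
    and agree: "\<And>n i. C n i \<in> ball x r \<Longrightarrow> f (C n i) = f x"
    and hit: "\<And>\<delta>. \<delta> > 0 \<Longrightarrow> \<exists>\<^sub>F n in sequentially. \<forall>i<\<kappa> n. C n i \<in> ball x \<delta>"
  shows "\<forall>\<^sub>F n in sequentially. Phi K f x (Zproc K f \<kappa> C T n) = 0"
proof -
  let ?Z = "Zproc K f \<kappa> C T"
  from Zproc_eventually_near_points[where \<kappa> = \<kappa> and C = C and x = x and k = K,
      OF kpos \<open>r > 0\<close> hit]
  obtain n0 where n0: "x \<in> ?Z n0 \<or> (\<exists>P\<subseteq>?Z n0. P \<subseteq> ball x r \<and> card P = K)" ..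
  have "Phi K f x (?Z n) = 0" if "n \<ge> n0" for n
  proof (cases "x \<in> ?Z n")
    case True
    then show ?thesis by (rule Phi_eq_0_if_member)
  next
    case False
    have mono: "?Z n0 \<subseteq> ?Z n"
      using \<open>n \<ge> n0\<close> by (rule Zproc_mono)
    with False n0 obtain P where P: "P \<subseteq> ?Z n" "P \<subseteq> ball x r" "card P = K"
      by auto
    have "f s = f x" if "s \<in> ?Z n" "s \<in> ball x r" for s
    proof -
      obtain m i where "s = C m i"
        using Zproc_subset_candidates[where \<kappa> = \<kappa>, OF kpos] \<open>s \<in> ?Z n\<close> by blast
      then show ?thesis using agree[of m i] \<open>s \<in> ball x r\<close> by simp
    qed
    then show ?thesis
      by (rule Phi_eq_0_if_near_labels_agree[OF finite_Zproc P(1,3,2) \<open>K \<ge> 1\<close>])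
  qed
  then show ?thesis
    by (auto simp: eventually_sequentially)
qed

section \<open>The second Borel-Cantelli lemma\<close>

lemma not_summable_tail_sums_unbounded:
  fixes q :: "nat \<Rightarrow> real"
  assumes nonneg: "\<And>n. 0 \<le> q n" and le1: "\<And>n. q n \<le> 1" and "\<not> summable q"
  shows "\<exists>M>m. L \<le> (\<Sum>n\<in>{m..<M}. q n)"
proof -
  obtain M where M: "sum q {..<M} > \<bar>L\<bar> + real m"
    using \<open>\<not> summable q\<close> summableI_nonneg_bounded[of q "\<bar>L\<bar> + real m"] nonneg
    by (meson not_le)
  have "sum q {..<m} \<le> real m"
    using sum_mono[of "{..<m}" q "\<lambda>_. 1"] le1 by simp
  moreover have "M > m"
  proof (rule ccontr)
    assume "\<not> M > m"
    then have "sum q {..<M} \<le> sum q {..<m}"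
      by (intro sum_mono2) (auto simp: nonneg)
    with M \<open>sum q {..<m} \<le> real m\<close> show False by linarith
  qed
  moreover have "sum q {..<M} = sum q {..<m} + sum q {m..<M}"
    using \<open>M > m\<close> by (simp add: sum.atLeastLessThan_concat[symmetric] atLeast0LessThan[symmetric])
  ultimately show ?thesis
    using M by (intro exI[of _ M]) auto
qed

lemma (in prob_space) borel_cantelli_AE2:
  fixes A :: "nat \<Rightarrow> 'a set"
  assumes indep: "indep_events A UNIV" and div: "\<not> summable (\<lambda>n. prob (A n))"
  shows "AE x in M. \<exists>\<^sub>F n in sequentially. x \<in> A n"
proof -
  have A: "A n \<in> events" for n
    using indep by (auto simp: indep_events_def)
  have "indep_sets (\<lambda>n. sigma_sets (space M) {A n}) UNIV"
    using indep unfolding indep_events_def_alt by (rule indep_sets_sigma) (auto simp: Int_stable_def)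
  then have compl: "indep_events (\<lambda>n. space M - A n) UNIV"
    unfolding indep_events_def_alt
    by (rule indep_sets_mono_sets) (auto intro: sigma_sets.Compl sigma_sets.Basic)
  have "{x \<in> space M. \<forall>n\<ge>m. x \<notin> A n} \<in> null_sets M" for m
  proof -
    let ?G = "{x \<in> space M. \<forall>n\<ge>m. x \<notin> A n}"
    have G: "?G \<in> events"
      using A by measurable
    have bound: "prob ?G \<le> exp (- L)" for L
    proof -
      obtain N where N: "N > m" "L \<le> (\<Sum>n\<in>{m..<N}. prob (A n))"
        using not_summable_tail_sums_unbounded[OF measure_nonneg prob_le_1 div] by blast
      have "{m..<N} \<noteq> {}"
        using N(1) by simp
      have "prob ?G \<le> prob (\<Inter>n\<in>{m..<N}. space M - A n)"
        using N(1) A by (intro finite_measure_mono sets.finite_INT) auto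
      also have "\<dots> = (\<Prod>n\<in>{m..<N}. prob (space M - A n))"
        using compl \<open>{m..<N} \<noteq> {}\<close> unfolding indep_events_def by blast
      also have "\<dots> = (\<Prod>n\<in>{m..<N}. 1 - prob (A n))"
        using A by (simp add: prob_compl)
      also have "\<dots> \<le> (\<Prod>n\<in>{m..<N}. exp (- prob (A n)))"
        by (intro prod_mono) (use exp_ge_add_one_self[of "- prob _"] in auto)
      also have "\<dots> = exp (- (\<Sum>n\<in>{m..<N}. prob (A n)))"
        by (simp add: exp_sum[symmetric] sum_negf)
      also have "\<dots> \<le> exp (- L)"
        using N(2) by simp
      finally show ?thesis .
    qed
    have "prob ?G \<le> 0 + e" if "e > 0" for e
      using bound[of "- ln e"] that by simp
    then have "prob ?G \<le> 0"
      by (rule field_le_epsilon)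
    then have "emeasure M ?G = 0"
      using measure_nonneg[of M ?G] by (simp add: emeasure_eq_measure)
    then show ?thesis
      using G by (rule null_setsI)
  qed
  then have "AE x in M. \<exists>n\<ge>m. x \<in> A n" for m
    by (rule AE_I') auto
  then show ?thesis
    by (simp add: AE_all_countable frequently_sequentially)
qed

section \<open>Almost sure behaviour of the candidates\<close>

lemma indep_vars_PiM_components:
  assumes "prob_space \<mu>"
  shows "prob_space.indep_vars (PiM (UNIV::'i set) (\<lambda>_. \<mu>)) (\<lambda>_. \<mu>) (\<lambda>j \<omega>. \<omega> j) UNIV"
proof -
  let ?P = "PiM (UNIV::'i set) (\<lambda>_. \<mu>)"
  interpret P: prob_space ?P
    using assms by (intro prob_space_PiM) auto
  have "distr ?P \<mu> (\<lambda>\<omega>. \<omega> i) = \<mu>" for i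
    using assms by (intro distr_PiM_component) auto
  then show ?thesis
    by (subst P.indep_vars_iff_distr_eq_PiM) (simp_all add: restrict_UNIV distr_id)
qed

lemma measure_PiM_all_in:
  assumes "prob_space \<mu>" "B \<in> sets \<mu>" "finite J" "J \<subseteq> I"
  shows "measure (PiM I (\<lambda>_. \<mu>)) {\<omega> \<in> space (PiM I (\<lambda>_. \<mu>)). \<forall>j\<in>J. \<omega> j \<in> B}
           = measure \<mu> B ^ card J"
proof -
  interpret prob_space \<mu> by fact
  have "{\<omega> \<in> space (PiM I (\<lambda>_. \<mu>)). \<forall>j\<in>J. \<omega> j \<in> B}
          = prod_emb I (\<lambda>_. \<mu>) J (Pi\<^sub>E J (\<lambda>_. B))"
    by (auto simp: prod_emb_def space_PiM PiE_iff dest: extensional_arb)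
  moreover have "emeasure (PiM I (\<lambda>_. \<mu>)) (prod_emb I (\<lambda>_. \<mu>) J (Pi\<^sub>E J (\<lambda>_. B)))
                   = emeasure \<mu> B ^ card J"
    using assms by (subst emeasure_PiM_emb) auto
  ultimately have "emeasure (PiM I (\<lambda>_. \<mu>)) {\<omega> \<in> space (PiM I (\<lambda>_. \<mu>)). \<forall>j\<in>J. \<omega> j \<in> B}
                     = ennreal (measure \<mu> B ^ card J)"
    by (simp add: emeasure_eq_measure ennreal_power)
  then show ?thesis
    by (simp add: measure_def)
qed

lemma AE_PiM_frequently_block_in:
  fixes \<mu> :: "'a measure" and \<kappa> :: "nat \<Rightarrow> nat"
  assumes \<mu>: "prob_space \<mu>" and B: "B \<in> sets \<mu>"
    and div: "\<not> summable (\<lambda>n. measure \<mu> B ^ \<kappa> n)"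
  shows "AE \<omega> in PiM UNIV (\<lambda>_. \<mu>). \<exists>\<^sub>F n in sequentially. \<forall>i<\<kappa> n. \<omega> (n, i) \<in> B"
proof -
  let ?P = "PiM (UNIV :: (nat \<times> nat) set) (\<lambda>_. \<mu>)"
  interpret P: prob_space ?P
    using \<mu> by (intro prob_space_PiM) auto
  define J where "J n = {n} \<times> {..<\<kappa> n}" for n
  define E where "E n = {\<omega> \<in> space ?P. \<forall>j\<in>J n. \<omega> j \<in> B}" for n
  have blocks: "P.indep_vars (\<lambda>n. PiM (J n) (\<lambda>_. \<mu>)) (\<lambda>n \<omega>. restrict (\<lambda>j. \<omega> j) (J n)) UNIV"
    by (rule P.indep_vars_restrict[OF indep_vars_PiM_components[OF \<mu>]])
       (auto simp: disjoint_family_on_def J_def)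
  have E_eq: "E n = (\<lambda>\<omega>. restrict (\<lambda>j. \<omega> j) (J n)) -` Pi\<^sub>E (J n) (\<lambda>_. B) \<inter> space ?P" for n
    by (auto simp: E_def space_PiM PiE_iff)
  have "Pi\<^sub>E (J n) (\<lambda>_. B) \<in> sets (PiM (J n) (\<lambda>_. \<mu>))" for n
    using B by (intro sets_PiM_I_finite) (auto simp: J_def)
  then have "P.indep_events E UNIV"
    using P.indep_varsD[OF blocks] blocks unfolding E_eq
    by (intro P.indep_eventsI) (auto simp: P.indep_vars_def measurable_sets)
  moreover have "P.prob (E n) = measure \<mu> B ^ \<kappa> n" for n
    using measure_PiM_all_in[OF \<mu> B, of "J n" UNIV] by (simp add: E_def J_def card_cartesian_product)
  ultimately have "AE \<omega> in ?P. \<exists>\<^sub>F n in sequentially. \<omega> \<in> E n"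
    using div by (intro P.borel_cantelli_AE2) simp_all
  then show ?thesis
    by (rule eventually_mono) (auto simp: E_def J_def elim: frequently_elim1)
qed

definition typical_candidates ::
    "'a measure \<Rightarrow> ('a \<Rightarrow> 'b) \<Rightarrow> (nat \<Rightarrow> nat) \<Rightarrow> 'a set set \<Rightarrow> (nat \<Rightarrow> nat \<Rightarrow> 'a) \<Rightarrow> bool" where
  "typical_candidates \<mu> f \<kappa> Bs C \<longleftrightarrow>
     (\<forall>B\<in>Bs. emeasure \<mu> B \<noteq> 0 \<longrightarrow> (\<exists>\<^sub>F n in sequentially. \<forall>i<\<kappa> n. C n i \<in> B)) \<and>
     (\<forall>B\<in>Bs. \<forall>y. emeasure \<mu> (B - f -` {y}) = 0 \<longrightarrow> (\<forall>n i. C n i \<in> B \<longrightarrow> f (C n i) = y))"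

lemma AE_PiM_typical_candidates:
  fixes \<mu> :: "'a measure" and f :: "'a \<Rightarrow> 'b::countable" and \<kappa> :: "nat \<Rightarrow> nat"
  assumes \<mu>: "prob_space \<mu>" and Bs: "countable Bs" "Bs \<subseteq> sets \<mu>"
    and f_sets: "\<And>y. f -` {y} \<in> sets \<mu>"
    and div: "\<And>\<rho>::real. 0 < \<rho> \<Longrightarrow> \<rho> \<le> 1 \<Longrightarrow> \<not> summable (\<lambda>n. \<rho> ^ \<kappa> n)"
  shows "AE \<omega> in PiM UNIV (\<lambda>_. \<mu>). typical_candidates \<mu> f \<kappa> Bs (\<lambda>n i. \<omega> (n, i))"
  unfolding typical_candidates_def
proof (rule eventually_conj)
  interpret prob_space \<mu> by fact
  show "AE \<omega> in PiM UNIV (\<lambda>_. \<mu>).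
          \<forall>B\<in>Bs. emeasure \<mu> B \<noteq> 0 \<longrightarrow> (\<exists>\<^sub>F n in sequentially. \<forall>i<\<kappa> n. \<omega> (n, i) \<in> B)"
  proof (intro AE_ball_countable' AE_impI Bs(1))
    fix B assume "B \<in> Bs" "emeasure \<mu> B \<noteq> 0"
    then have "B \<in> sets \<mu>" "prob B > 0"
      using Bs by (auto simp: emeasure_eq_measure zero_less_measure_iff)
    then show "AE \<omega> in PiM UNIV (\<lambda>_. \<mu>). \<exists>\<^sub>F n in sequentially. \<forall>i<\<kappa> n. \<omega> (n, i) \<in> B"
      using div prob_le_1 by (intro AE_PiM_frequently_block_in[OF \<mu>]) auto
  qed
  show "AE \<omega> in PiM UNIV (\<lambda>_. \<mu>).
          \<forall>B\<in>Bs. \<forall>y. emeasure \<mu> (B - f -` {y}) = 0 \<longrightarrow>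
            (\<forall>(n::nat) (i::nat). \<omega> (n, i) \<in> B \<longrightarrow> f (\<omega> (n, i)) = y)"
  proof (intro AE_ball_countable' AE_all_countable[THEN iffD2] allI AE_impI Bs(1))
    fix B y and n i :: nat
    assume "B \<in> Bs" "emeasure \<mu> (B - f -` {y}) = 0"
    then have "AE x in \<mu>. x \<in> B \<longrightarrow> f x = y"
      by (intro AE_I'[of "B - f -` {y}"]) (use Bs f_sets in \<open>auto simp: null_sets_def\<close>)
    then show "AE \<omega> in PiM UNIV (\<lambda>_. \<mu>). \<omega> (n, i) \<in> B \<longrightarrow> f (\<omega> (n, i)) = y"
      using \<mu> by (intro AE_PiM_component) auto
  qed
qed

lemma AE_fst_pair_measure:
  assumes "AE x in M1. P x" and "sigma_finite_measure M2"
  shows "AE \<omega> in M1 \<Otimes>\<^sub>M M2. P (fst \<omega>)"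
proof -
  interpret M2: sigma_finite_measure M2 by fact
  from assms(1) obtain N where N: "{x \<in> space M1. \<not> P x} \<subseteq> N" "emeasure M1 N = 0" "N \<in> sets M1"
    by (rule AE_E)
  show ?thesis
  proof (rule AE_I')
    show "N \<times> space M2 \<in> null_sets (M1 \<Otimes>\<^sub>M M2)"
      using N by (simp add: null_sets_def M2.emeasure_pair_measure_Times)
    show "{\<omega> \<in> space (M1 \<Otimes>\<^sub>M M2). \<not> P (fst \<omega>)} \<subseteq> N \<times> space M2"
      using N(1) by (auto simp: space_pair_measure)
  qed
qed

lemma AE_sample_space_candidates:
  assumes "AE \<omega> in PiM UNIV (\<lambda>_. \<mu>). P \<omega>"
  shows "AE \<omega> in sample_space \<mu>. P (fst \<omega>)"
proof -
  have "prob_space (PiM UNIV (\<lambda>_. uniform_measure lborel {0..1::real}))"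
    by (intro prob_space_PiM prob_space_uniform_measure) auto
  then show ?thesis
    unfolding sample_space_def
    by (intro AE_fst_pair_measure[OF assms] prob_space_imp_sigma_finite)
qed

lemma separable_countable_ball_family:
  assumes "separable_space (euclidean :: 'a::metric_space topology)"
  obtains Bs :: "'a::metric_space set set"
  where "countable Bs" "\<And>B. B \<in> Bs \<Longrightarrow> \<exists>c r. B = ball c r"
    and "\<And>x a b. 0 < a \<Longrightarrow> a < b \<Longrightarrow> \<exists>B\<in>Bs. ball x a \<subseteq> B \<and> B \<subseteq> ball x b"
proof -
  obtain D :: "'a set" where D: "countable D" "closure D = UNIV"
    using assms unfolding separable_space_def by auto
  define Bs where "Bs = (\<lambda>(d, q). ball d (real_of_rat q)) ` (D \<times> (UNIV :: rat set))"
  show ?thesis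
  proof (rule that[of Bs])
    show "countable Bs"
      unfolding Bs_def using D(1) by simp
    show "\<exists>c r. B = ball c r" if "B \<in> Bs" for B
      using that unfolding Bs_def by (auto split: prod.splits)
    show "\<exists>B\<in>Bs. ball x a \<subseteq> B \<and> B \<subseteq> ball x b" if "0 < a" "a < b" for x :: 'a and a b :: real
    proof -
      define \<delta> where "\<delta> = (b - a) / 3"
      have "\<delta> > 0" "a + \<delta> < b - \<delta>"
        using that unfolding \<delta>_def by (auto simp: field_simps)
      obtain d where d: "d \<in> D" "dist d x < \<delta>"
        using D(2) closure_approachable[of x D] \<open>\<delta> > 0\<close> by auto
      obtain r where r: "r \<in> \<rat>" "a + \<delta> < r" "r < b - \<delta>"
        using Rats_dense_in_real[OF \<open>a + \<delta> < b - \<delta>\<close>] by blast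
      have "ball d r \<in> Bs"
        using d(1) r(1) unfolding Bs_def by (auto elim!: Rats_cases)
      moreover have "ball x a \<subseteq> ball d r"
      proof
        fix y assume "y \<in> ball x a"
        then show "y \<in> ball d r"
          using d(2) r(2) dist_triangle[of d y x] by simp
      qed
      moreover have "ball d r \<subseteq> ball x b"
      proof
        fix y assume "y \<in> ball d r"
        moreover have "dist x y \<le> dist d x + dist d y"
          using dist_triangle[of x y d] by (simp add: dist_commute)
        ultimately show "y \<in> ball x b"
          using d(2) r(3) by simp
      qed
      ultimately show ?thesis by blast
    qed
  qed
qed

lemma Phi_Zproc_eventually_zero_off_null_balls:
  assumes kpos: "\<And>n. n \<ge> 1 \<Longrightarrow> \<kappa> n \<ge> 1" and "K \<ge> 1"
    and basis: "\<And>x a b. 0 < a \<Longrightarrow> a < b \<Longrightarrow> \<exists>B\<in>Bs. ball x a \<subseteq> B \<and> B \<subseteq> ball x b"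
    and balls: "\<And>c r. ball c r \<in> sets \<mu>" and f_sets: "\<And>y. f -` {y} \<in> sets \<mu>"
    and typical: "typical_candidates \<mu> f \<kappa> Bs C"
    and interior: "\<not> boundary_pt \<mu> f x"
    and x_pos: "\<And>B. B \<in> Bs \<Longrightarrow> x \<in> B \<Longrightarrow> emeasure \<mu> B \<noteq> 0"
  shows "\<forall>\<^sub>F n in sequentially. Phi K f x (Zproc K f \<kappa> C T n) = 0"
proof -
  obtain \<epsilon> where \<epsilon>: "\<epsilon> > 0" "emeasure \<mu> (ball x \<epsilon> - f -` {f x}) = 0"
    using interior by (auto simp: boundary_pt_def not_gr_zero)
  obtain B0 where B0: "B0 \<in> Bs" "ball x (\<epsilon>/2) \<subseteq> B0" "B0 \<subseteq> ball x \<epsilon>"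
    using basis[of "\<epsilon>/2" \<epsilon> x] \<epsilon>(1) by auto
  have "emeasure \<mu> (B0 - f -` {f x}) = 0"
  proof (rule emeasure_eq_0[OF _ \<epsilon>(2)])
    show "ball x \<epsilon> - f -` {f x} \<in> sets \<mu>"
      using balls f_sets by (rule sets.Diff)
    show "B0 - f -` {f x} \<subseteq> ball x \<epsilon> - f -` {f x}"
      using B0(3) by blast
  qed
  then have agree: "f (C n i) = f x" if "C n i \<in> ball x (\<epsilon>/2)" for n i
    using typical B0(1,2) that unfolding typical_candidates_def by blast
  have hit: "\<exists>\<^sub>F n in sequentially. \<forall>i<\<kappa> n. C n i \<in> ball x \<delta>" if "\<delta> > 0" for \<delta>
  proof -
    obtain B where B: "B \<in> Bs" "ball x (\<delta>/2) \<subseteq> B" "B \<subseteq> ball x \<delta>"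
      using basis[of "\<delta>/2" \<delta> x] \<open>\<delta> > 0\<close> by auto
    have "x \<in> B"
      using B(2) \<open>\<delta> > 0\<close> by auto
    with B(1) have "emeasure \<mu> B \<noteq> 0"
      by (rule x_pos)
    then have "\<exists>\<^sub>F n in sequentially. \<forall>i<\<kappa> n. C n i \<in> B"
      using typical B(1) unfolding typical_candidates_def by blast
    then show ?thesis
      by (rule frequently_elim1) (use B(3) in blast)
  qed
  have "\<epsilon>/2 > 0"
    using \<epsilon>(1) by simp
  from Phi_Zproc_eventually_zero[OF kpos \<open>K \<ge> 1\<close> this agree hit] show ?thesis .
qed

lemma limsup_Phi_pos_subset:
  assumes kpos: "\<And>n. n \<ge> 1 \<Longrightarrow> \<kappa> n \<ge> 1" and "K \<ge> 1"
    and basis: "\<And>x a b. 0 < a \<Longrightarrow> a < b \<Longrightarrow> \<exists>B\<in>Bs. ball x a \<subseteq> B \<and> B \<subseteq> ball x b"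
    and balls: "\<And>c r. ball c r \<in> sets \<mu>" and f_sets: "\<And>y. f -` {y} \<in> sets \<mu>"
    and typical: "typical_candidates \<mu> f \<kappa> Bs C"
  shows "{x. \<exists>\<^sub>F n in sequentially. Phi K f x (Zproc K f \<kappa> C T n) > 0}
           \<subseteq> {b. boundary_pt \<mu> f b} \<union> (\<Union>B\<in>{B\<in>Bs. emeasure \<mu> B = 0}. B)"
proof (rule subsetI, rule ccontr)
  fix x
  assume "x \<in> {x. \<exists>\<^sub>F n in sequentially. Phi K f x (Zproc K f \<kappa> C T n) > 0}"
    and "x \<notin> {b. boundary_pt \<mu> f b} \<union> (\<Union>B\<in>{B\<in>Bs. emeasure \<mu> B = 0}. B)"
  moreover from this(2) have "\<forall>\<^sub>F n in sequentially. Phi K f x (Zproc K f \<kappa> C T n) = 0"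
    by (intro Phi_Zproc_eventually_zero_off_null_balls[OF kpos \<open>K \<ge> 1\<close> basis balls f_sets typical])
      auto
  ultimately show False
    unfolding frequently_def by (auto elim: eventually_mono)
qed

theorem mainTheorem10:
  fixes \<mu> :: "'a::metric_space measure"
    and f :: "'a \<Rightarrow> 'b::countable"
    and \<kappa> :: "nat \<Rightarrow> nat"
    and K :: nat
  assumes prob: "prob_space \<mu>"
    and sets_mu: "sets \<mu> = sets borel"
    and f_meas: "f \<in> measurable \<mu> (count_space UNIV)"
    and K2: "K \<ge> 2"
    and kappa_pos: "\<And>n. n \<ge> 1 \<Longrightarrow> \<kappa> n \<ge> 1"
    and kappa_div: "\<And>\<rho>::real. 0 < \<rho> \<Longrightarrow> \<rho> \<le> 1 \<Longrightarrow> \<not> summable (\<lambda>n. \<rho> ^ \<kappa> n)"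
    and sep: "separable_space (euclidean :: 'a topology)"
    and bdry_null: "\<exists>N\<in>null_sets \<mu>. {b. boundary_pt \<mu> f b} \<subseteq> N"
  shows "AE \<omega> in sample_space \<mu>.
           (let C = (\<lambda>n i. fst \<omega> (n, i)); T = snd \<omega>;
                Q = {x. \<exists>\<^sub>F n in sequentially. Phi K f x (Zproc K f \<kappa> C T n) > 0}
            in \<exists>N\<in>null_sets \<mu>. Q \<subseteq> N)"
proof -
  have balls: "ball c r \<in> sets \<mu>" for c r
    using sets_mu by simp
  have f_sets: "f -` {y} \<in> sets \<mu>" for y
    using measurable_sets[OF f_meas, of "{y}"] sets_eq_imp_space_eq[OF sets_mu] by simp
  obtain Bs :: "'a set set"
    where Bs: "countable Bs" and Bs_balls: "\<And>B. B \<in> Bs \<Longrightarrow> \<exists>c r. B = ball c r"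
    and basis: "\<And>x a b. 0 < a \<Longrightarrow> a < b \<Longrightarrow> \<exists>B\<in>Bs. ball x a \<subseteq> B \<and> B \<subseteq> ball x b"
    using separable_countable_ball_family[OF sep] by blast
  have Bs_sets: "Bs \<subseteq> sets \<mu>"
    using Bs_balls balls by blast
  obtain Nb where Nb: "Nb \<in> null_sets \<mu>" "{b. boundary_pt \<mu> f b} \<subseteq> Nb"
    using bdry_null by blast
  define N where "N = Nb \<union> (\<Union>B\<in>{B\<in>Bs. emeasure \<mu> B = 0}. B)"
  have N_null: "N \<in> null_sets \<mu>"
    unfolding N_def using Nb(1) Bs Bs_sets by (intro null_sets.Un null_sets_UN') auto
  have typical: "AE \<omega> in sample_space \<mu>. typical_candidates \<mu> f \<kappa> Bs (\<lambda>n i. fst \<omega> (n, i))"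
    using AE_PiM_typical_candidates[OF prob Bs Bs_sets f_sets kappa_div]
    by (rule AE_sample_space_candidates)
  have limsup_subset: "{x. \<exists>\<^sub>F n in sequentially. Phi K f x (Zproc K f \<kappa> C T n) > 0} \<subseteq> N"
    if "typical_candidates \<mu> f \<kappa> Bs C" for C T
    using limsup_Phi_pos_subset[OF kappa_pos _ basis balls f_sets that, of K T] K2 Nb(2)
    unfolding N_def by fastforce
  show ?thesis
    unfolding Let_def using typical by (rule eventually_mono) (use N_null limsup_subset in blast)
qed

end
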